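(* Let $\mathbb{V}$ be a BIT speciale variety with signature $\mathcal{F}$, BIT speciale terms $0$, $\alpha_1,\dots,\alpha_n$, $\theta$ (as in the context). In every term below, the variables $y$ (with or without indices) are the ideal variables and the variables $x$ (with or without indices) are the parameters; all listed terms are ideal terms in their $y$-variables. For an operation symbol $\tau$ of arity $k$ and $1\le i\le n$, write $$T_{\tau,i}:=\alpha_i\big(\tau(\theta(y_{11},\dots,y_{1n},x_1),\theta(y_{21},\dots,y_{2n},x_2),\dots,\theta(y_{k1},\dots,y_{kn},x_k)),\ \tau(x_1,\dots,x_k)\big),$$ and, for $1\le j\le k$, $$S_{\tau,i,j}:=\alpha_i\big(\tau(x_1,\dots,x_{j-1},\theta(y_1,\dots,y_n,x_j),x_{j+1},\dots,x_k),\ \tau(x_1,\dots,x_k)\big),$$ and let $R_i:=\alpha_i(\theta(y_1,\dots,y_n,x),\theta(y_{n+1},\dots,y_{2n},x))$. Then each of the following sets of terms determines ideals in $\mathbb{V}$: (i) the terms $\theta(y_1,\dots,y_n,y_{n+1})$ and $\alpha_i(y_1,y_2)$ ($1\le i\le n$), together with $T_{\tau,i}$ for all $\tau\in\mathcal{F}\cup\{\theta\}$ and all $1\le i\le n$; (ii) the terms $0$, $\theta(y_1,\dots,y_n,y_{n+1})$ and $\alpha_i(y,0)$ ($1\le i\le n$), together with $T_{\tau,i}$ for all $\tau\in\mathcal{F}\cup\{\theta\}\cup\{\alpha_j\mid 1\le j\le n\}$ and all $1\le i\le n$; (iii) the terms $\theta(y_1,\dots,y_n,y_{n+1})$, $\alpha_i(y,0)$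 and $R_i$ ($1\le i\le n$), together with $T_{\tau,i}$ for all $\tau\in\mathcal{F}$ and all $1\le i\le n$; (iv) the terms $R_i$, $\theta(y_1,\dots,y_n,y_{n+1})$ and $\alpha_i(y,0)$ ($1\le i\le n$), together with $S_{\tau,i,j}$ for all $\tau\in\mathcal{F}$ (of arity $k$) and all $i,j$ with $1\le i\le n$, $1\le j\le k$. Moreover, if $\mathbb{V}$ is semi-abelian, then in (i) the terms $\theta(y_1,\dots,y_{n+1}),\alpha_i(y_1,y_2)$, in (ii) the terms $0,\theta(y_1,\dots,y_{n+1}),\alpha_i(y,0)$, in (iii) the terms $\theta(y_1,\dots,y_{n+1}),\alpha_i(y,0)$, and in (iv) the terms $\theta(y_1,\dots,y_{n+1}),\alpha_i(y,0)$ can be replaced by the terms $\tau(y_1,\dots,y_k)$ for all operation symbols $\tau\in\mathcal{F}$ (including the constant $0$), $k$ being the arity of $\tau$, and the resulting sets still determine ideals in $\mathbb{V}$.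
   Context: Let $\mathbb{V}$ be a variety of universal algebras with signature $\mathcal{F}$ (a set of finitary operation symbols; constants are 0-ary). $\mathbb{V}$ is called BIT speciale if its algebraic theory contains a constant $0$ and, for some natural number $n\ge1$, binary terms $\alpha_1,\dots,\alpha_n$ and an $(n+1)$-ary term $\theta$ such that the identities $\alpha_i(x,x)=0$ ($1\le i\le n$) and $\theta(\alpha_1(x,y),\dots,\alpha_n(x,y),y)=x$ hold in $\mathbb{V}$. A semi-abelian variety is (equivalently, by Bourn–Janelidze) a BIT speciale variety in which $0$ is the only constant of its algebraic theory. A term $t(x_1,\dots,x_m,y_1,\dots,y_p)$ over $\mathcal{F}$ is an ideal term in the variables $y_1,\dots,y_p$ if $t(x_1,\dots,x_m,0,\dots,0)=0$ is an identity of $\mathbb{V}$. A non-empty subset $H$ of a $\mathbb{V}$-algebra $A$ is an ideal if for every ideal term $t(x_1,\dots,x_m,y_1,\dots,y_p)$ in the variables $y_1,\dots,y_p$, all $a_1,\dots,a_m\in A$ and all $b_1,\dots,b_p\in H$, one has $t(a_1,\dots,a_m,b_1,\dots,b_p)\in H$. A set $T$ of ideal terms determines ideals in $\mathbb{V}$ if for every $\mathbb{V}$-algebra $A$, a non-empty subset $H\subseteq A$ is an ideal if and only if for every $t\in T$, every assignment of elements of $A$ to its $x$-variables and of elements of $H$ to its $y$-variables yields a value in $H$. *)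

theory Defs
  imports Main
begin

datatype ('f, 'v) trm = Var 'v | App 'f "('f, 'v) trm list"

fun wf_trm :: "('f \<Rightarrow> nat) \<Rightarrow> ('f, 'v) trm \<Rightarrow> bool" where
  "wf_trm ar (Var v) = True"
| "wf_trm ar (App f ts) = (length ts = ar f \<and> (\<forall>t\<in>set ts. wf_trm ar t))"

fun vars :: "('f, 'v) trm \<Rightarrow> 'v set" where
  "vars (Var v) = {v}"
| "vars (App f ts) = (\<Union>t\<in>set ts. vars t)"

fun subst :: "('v \<Rightarrow> ('f, 'w) trm) \<Rightarrow> ('f, 'v) trm \<Rightarrow> ('f, 'w) trm" where
  "subst \<sigma> (Var v) = \<sigma> v"
| "subst \<sigma> (App f ts) = App f (map (subst \<sigma>) ts)"

text \<open>Evaluation in an algebra whose carrier is the whole type 'a.\<close>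
fun eval :: "('f \<Rightarrow> 'a list \<Rightarrow> 'a) \<Rightarrow> ('v \<Rightarrow> 'a) \<Rightarrow> ('f, 'v) trm \<Rightarrow> 'a" where
  "eval I \<rho> (Var v) = \<rho> v"
| "eval I \<rho> (App f ts) = I f (map (eval I \<rho>) ts)"

text \<open>Instantiating the variables 0,1,...,m-1 of a term by a list of m terms
  (this is how a derived m-ary operation, given by a term, is applied).\<close>
definition inst :: "('f, nat) trm \<Rightarrow> ('f, nat) trm list \<Rightarrow> ('f, nat) trm" where
  "inst t ts = subst (\<lambda>v. if v < length ts then ts ! v else Var v) t"

text \<open>The variety is presented by a set E of well-formed defining identities.
  The identities holding in the variety (its algebraic theory) are the equational
  consequences of E (Birkhoff).\<close>

definition wf_eqs :: "('f \<Rightarrow> nat) \<Rightarrow> (('f, nat) trm \<times> ('f, nat) trm) set \<Rightarrow> bool" where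
  "wf_eqs ar E \<longleftrightarrow> (\<forall>(l, r)\<in>E. wf_trm ar l \<and> wf_trm ar r)"

inductive_set eqth :: "('f \<Rightarrow> nat) \<Rightarrow> (('f, nat) trm \<times> ('f, nat) trm) set
    \<Rightarrow> (('f, nat) trm \<times> ('f, nat) trm) set"
  for ar E where
  ax: "(l, r) \<in> E \<Longrightarrow> (l, r) \<in> eqth ar E"
| refl: "wf_trm ar t \<Longrightarrow> (t, t) \<in> eqth ar E"
| sym: "(s, t) \<in> eqth ar E \<Longrightarrow> (t, s) \<in> eqth ar E"
| trans: "(s, t) \<in> eqth ar E \<Longrightarrow> (t, u) \<in> eqth ar E \<Longrightarrow> (s, u) \<in> eqth ar E"
| cong: "length ss = ar f \<Longrightarrow> list_all2 (\<lambda>s t. (s, t) \<in> eqth ar E) ss ts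
          \<Longrightarrow> (App f ss, App f ts) \<in> eqth ar E"
| subst: "(s, t) \<in> eqth ar E \<Longrightarrow> (\<forall>v. wf_trm ar (\<sigma> v))
          \<Longrightarrow> (subst \<sigma> s, subst \<sigma> t) \<in> eqth ar E"

definition models :: "(('f, nat) trm \<times> ('f, nat) trm) set \<Rightarrow> ('f \<Rightarrow> 'a list \<Rightarrow> 'a) \<Rightarrow> bool" where
  "models E I \<longleftrightarrow> (\<forall>(l, r)\<in>E. \<forall>\<rho>. eval I \<rho> l = eval I \<rho> r)"

definition bit_speciale ::
  "('f \<Rightarrow> nat) \<Rightarrow> (('f, nat) trm \<times> ('f, nat) trm) set \<Rightarrow> nat
    \<Rightarrow> ('f, nat) trm \<Rightarrow> (nat \<Rightarrow> ('f, nat) trm) \<Rightarrow> ('f, nat) trm \<Rightarrow> bool" where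
  "bit_speciale ar E n z alpha theta \<longleftrightarrow>
     n \<ge> 1
   \<and> wf_trm ar z \<and> vars z = {}
   \<and> (\<forall>i\<in>{1..n}. wf_trm ar (alpha i) \<and> vars (alpha i) \<subseteq> {0, 1})
   \<and> wf_trm ar theta \<and> vars theta \<subseteq> {0..n}
   \<and> (\<forall>i\<in>{1..n}. (inst (alpha i) [Var 0, Var 0], z) \<in> eqth ar E)
   \<and> (inst theta (map (\<lambda>i. inst (alpha i) [Var 0, Var 1]) [1..<n+1] @ [Var 1]), Var 0)
        \<in> eqth ar E"

definition only_constant_zero ::
  "('f \<Rightarrow> nat) \<Rightarrow> (('f, nat) trm \<times> ('f, nat) trm) set \<Rightarrow> ('f, nat) trm \<Rightarrow> bool" where
  "only_constant_zero ar E z \<longleftrightarrow>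
     (\<forall>c. wf_trm ar c \<and> vars c = {} \<longrightarrow> (c, z) \<in> eqth ar E)"

definition ideal_term ::
  "('f \<Rightarrow> nat) \<Rightarrow> (('f, nat) trm \<times> ('f, nat) trm) set \<Rightarrow> ('f, nat) trm
    \<Rightarrow> ('f, nat) trm \<Rightarrow> nat set \<Rightarrow> bool" where
  "ideal_term ar E z t Y \<longleftrightarrow>
     wf_trm ar t \<and> (subst (\<lambda>v. if v \<in> Y then z else Var v) t, z) \<in> eqth ar E"

definition closed_under :: "('f \<Rightarrow> 'a list \<Rightarrow> 'a) \<Rightarrow> 'a set \<Rightarrow> ('f, nat) trm \<Rightarrow> nat set \<Rightarrow> bool" where
  "closed_under I H t Y \<longleftrightarrow> (\<forall>\<rho>. (\<forall>v\<in>Y. \<rho> v \<in> H) \<longrightarrow> eval I \<rho> t \<in> H)"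

definition is_ideal ::
  "('f \<Rightarrow> nat) \<Rightarrow> (('f, nat) trm \<times> ('f, nat) trm) set \<Rightarrow> ('f, nat) trm
    \<Rightarrow> ('f \<Rightarrow> 'a list \<Rightarrow> 'a) \<Rightarrow> 'a set \<Rightarrow> bool" where
  "is_ideal ar E z I H \<longleftrightarrow>
     H \<noteq> {} \<and> (\<forall>t Y. ideal_term ar E z t Y \<longrightarrow> closed_under I H t Y)"

text \<open>The algebra type 'a is a free type variable,
  universally quantified at theorem level.\<close>
definition determines_ideals ::
  "('f \<Rightarrow> nat) \<Rightarrow> (('f, nat) trm \<times> ('f, nat) trm) set \<Rightarrow> ('f, nat) trm
    \<Rightarrow> (('f, nat) trm \<times> nat set) set \<Rightarrow> 'a itself \<Rightarrow> bool" where
  "determines_ideals ar E z T _ \<longleftrightarrow>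
     (\<forall>(I :: 'f \<Rightarrow> 'a list \<Rightarrow> 'a). models E I \<longrightarrow>
        (\<forall>H. H \<noteq> {} \<longrightarrow>
           (is_ideal ar E z I H \<longleftrightarrow> (\<forall>(t, Y)\<in>T. closed_under I H t Y))))"

text \<open>Variable conventions: parameter x_j is Var (2j), ideal variable y_j is
  Var (2j+1) (indices 0-based); the ideal variables are exactly the odd ones.
  Double-indexed y_{a,b} (a < k, b < n) is y_(a*n+b).\<close>

definition xv :: "nat \<Rightarrow> ('f, nat) trm" where "xv j = Var (2 * j)"
definition yv :: "nat \<Rightarrow> ('f, nat) trm" where "yv j = Var (2 * j + 1)"
definition Yodd :: "nat set" where "Yodd = {v. odd v}"

text \<open>An (possibly derived) operation is represented by the function building
  the term from argument terms, together with its arity.\<close>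

definition T_term :: "nat \<Rightarrow> (nat \<Rightarrow> ('f, nat) trm) \<Rightarrow> ('f, nat) trm
    \<Rightarrow> (('f, nat) trm list \<Rightarrow> ('f, nat) trm) \<Rightarrow> nat \<Rightarrow> nat \<Rightarrow> ('f, nat) trm" where
  "T_term n alpha theta g k i =
     inst (alpha i)
       [g (map (\<lambda>a. inst theta (map (\<lambda>b. yv (a * n + b)) [0..<n] @ [xv a])) [0..<k]),
        g (map xv [0..<k])]"

text \<open>S_{tau,i,j}; here j is 0-based (j < k).\<close>
definition S_term :: "nat \<Rightarrow> (nat \<Rightarrow> ('f, nat) trm) \<Rightarrow> ('f, nat) trm
    \<Rightarrow> (('f, nat) trm list \<Rightarrow> ('f, nat) trm) \<Rightarrow> nat \<Rightarrow> nat \<Rightarrow> nat \<Rightarrow> ('f, nat) trm" where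
  "S_term n alpha theta g k i j =
     inst (alpha i)
       [g (map (\<lambda>a. if a = j then inst theta (map yv [0..<n] @ [xv a]) else xv a) [0..<k]),
        g (map xv [0..<k])]"

definition R_term :: "nat \<Rightarrow> (nat \<Rightarrow> ('f, nat) trm) \<Rightarrow> ('f, nat) trm \<Rightarrow> nat \<Rightarrow> ('f, nat) trm" where
  "R_term n alpha theta i =
     inst (alpha i) [inst theta (map yv [0..<n] @ [xv 0]),
                     inst theta (map (\<lambda>b. yv (n + b)) [0..<n] @ [xv 0])]"

definition theta_y :: "nat \<Rightarrow> ('f, nat) trm \<Rightarrow> ('f, nat) trm" where
  "theta_y n theta = inst theta (map yv [0..<n+1])"

definition alpha_yy :: "(nat \<Rightarrow> ('f, nat) trm) \<Rightarrow> nat \<Rightarrow> ('f, nat) trm" where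
  "alpha_yy alpha i = inst (alpha i) [yv 0, yv 1]"

definition alpha_y0 :: "('f, nat) trm \<Rightarrow> (nat \<Rightarrow> ('f, nat) trm) \<Rightarrow> nat \<Rightarrow> ('f, nat) trm" where
  "alpha_y0 z alpha i = inst (alpha i) [yv 0, z]"

definition op_y :: "('f \<Rightarrow> nat) \<Rightarrow> 'f \<Rightarrow> ('f, nat) trm" where
  "op_y ar f = App f (map yv [0..<ar f])"

definition TF :: "('f \<Rightarrow> nat) \<Rightarrow> nat \<Rightarrow> (nat \<Rightarrow> ('f, nat) trm) \<Rightarrow> ('f, nat) trm \<Rightarrow> ('f, nat) trm set" where
  "TF ar n alpha theta = {T_term n alpha theta (App f) (ar f) i | f i. i \<in> {1..n}}"

definition Ttheta :: "nat \<Rightarrow> (nat \<Rightarrow> ('f, nat) trm) \<Rightarrow> ('f, nat) trm \<Rightarrow> ('f, nat) trm set" where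
  "Ttheta n alpha theta = {T_term n alpha theta (inst theta) (n + 1) i | i. i \<in> {1..n}}"

definition Talpha :: "nat \<Rightarrow> (nat \<Rightarrow> ('f, nat) trm) \<Rightarrow> ('f, nat) trm \<Rightarrow> ('f, nat) trm set" where
  "Talpha n alpha theta =
     {T_term n alpha theta (inst (alpha j)) 2 i | i j. i \<in> {1..n} \<and> j \<in> {1..n}}"

definition SF :: "('f \<Rightarrow> nat) \<Rightarrow> nat \<Rightarrow> (nat \<Rightarrow> ('f, nat) trm) \<Rightarrow> ('f, nat) trm \<Rightarrow> ('f, nat) trm set" where
  "SF ar n alpha theta =
     {S_term n alpha theta (App f) (ar f) i j | f i j. i \<in> {1..n} \<and> j < ar f}"

definition Rs :: "nat \<Rightarrow> (nat \<Rightarrow> ('f, nat) trm) \<Rightarrow> ('f, nat) trm \<Rightarrow> ('f, nat) trm set" where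
  "Rs n alpha theta = {R_term n alpha theta i | i. i \<in> {1..n}}"

definition AlphaYY :: "nat \<Rightarrow> (nat \<Rightarrow> ('f, nat) trm) \<Rightarrow> ('f, nat) trm set" where
  "AlphaYY n alpha = {alpha_yy alpha i | i. i \<in> {1..n}}"

definition AlphaY0 :: "nat \<Rightarrow> ('f, nat) trm \<Rightarrow> (nat \<Rightarrow> ('f, nat) trm) \<Rightarrow> ('f, nat) trm set" where
  "AlphaY0 n z alpha = {alpha_y0 z alpha i | i. i \<in> {1..n}}"

definition OpsY :: "('f \<Rightarrow> nat) \<Rightarrow> ('f, nat) trm \<Rightarrow> ('f, nat) trm set" where
  "OpsY ar z = insert z (range (op_y ar))"

definition with_Y :: "('f, nat) trm set \<Rightarrow> (('f, nat) trm \<times> nat set) set" where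
  "with_Y S = (\<lambda>t. (t, Yodd)) ` S"

definition set_i where
  "set_i ar n z alpha theta =
     ({theta_y n theta} \<union> AlphaYY n alpha, TF ar n alpha theta \<union> Ttheta n alpha theta)"
definition set_ii where
  "set_ii ar n z alpha theta =
     ({z, theta_y n theta} \<union> AlphaY0 n z alpha,
      TF ar n alpha theta \<union> Ttheta n alpha theta \<union> Talpha n alpha theta)"
definition set_iii where
  "set_iii ar n z alpha theta =
     ({theta_y n theta} \<union> AlphaY0 n z alpha, Rs n alpha theta \<union> TF ar n alpha theta)"
definition set_iv where
  "set_iv ar n z alpha theta =
     ({theta_y n theta} \<union> AlphaY0 n z alpha, Rs n alpha theta \<union> SF ar n alpha theta)"

text \<open>Each set is split as (replaceable part, remaining part).\<close>

end

theory Submission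
  imports Defs
begin

(* Write a ~ b (alpha_in H a b) when alpha_i(a, b) lies in H for all i.  If H contains 0, is
   closed under theta and under every alpha_i(-, 0), and the basic operations preserve ~, then H
   is an ideal: for an ideal term t, induction on t gives t(a, h) ~ t(a, 0) = 0, and then
   t(a, h) = theta(alpha_1(t(a, h), 0), ..., alpha_n(t(a, h), 0), 0) lies in H.
   In each listed set, the first group of terms (or, for a semi-abelian variety, the basic
   operations, since every closed term is 0 there) yields these closure properties.  The terms
   T_{tau,i} make the operations preserve ~ directly; the S_{tau,i,j} do so one argument at a
   time, the R_i making ~ symmetric and transitive.  Conversely, every listed term is an ideal
   term, because putting 0 for the y's turns theta(..., x) into x and alpha_i(s, s) into 0. *)

section \<open>Terms and equational logic\<close>

lemma eval_subst: "eval I \<rho> (subst \<sigma> t) = eval I (\<lambda>v. eval I \<rho> (\<sigma> v)) t"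
  by (induction t) (auto cong: map_cong)

lemma eval_cong: "(\<forall>v\<in>vars t. \<rho> v = \<rho>' v) \<Longrightarrow> eval I \<rho> t = eval I \<rho>' t"
  by (induction t) (auto cong: map_cong)

lemma subst_cong: "(\<forall>v\<in>vars t. \<sigma> v = \<sigma>' v) \<Longrightarrow> subst \<sigma> t = subst \<sigma>' t"
  by (induction t) (auto cong: map_cong)

lemma subst_subst: "subst \<sigma> (subst \<tau> t) = subst (\<lambda>v. subst \<sigma> (\<tau> v)) t"
  by (induction t) auto

lemma subst_closed: "vars t = {} \<Longrightarrow> subst \<sigma> t = t"
  by (induction t) (auto intro: map_idI)

lemma wf_subst: "wf_trm ar t \<Longrightarrow> (\<forall>v\<in>vars t. wf_trm ar (\<sigma> v)) \<Longrightarrow> wf_trm ar (subst \<sigma> t)"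
  by (induction t) auto

lemma eqth_sound:
  assumes "(s, t) \<in> eqth ar E" "models E I"
  shows "eval I \<rho> s = eval I \<rho> t"
  using assms(1)
proof (induction arbitrary: \<rho> rule: eqth.induct)
  case (ax l r)
  then show ?case using assms(2) unfolding models_def by auto
next
  case (cong ss f ts)
  then have "map (eval I \<rho>) ss = map (eval I \<rho>) ts"
    by (auto simp: list_all2_conv_all_nth intro: nth_equalityI)
  then show ?case by simp
next
  case (subst s t \<sigma>)
  then show ?case by (simp add: eval_subst)
qed auto

lemma eqth_subst_cong:
  "wf_trm ar t \<Longrightarrow> (\<forall>v\<in>vars t. (\<sigma> v, \<sigma>' v) \<in> eqth ar E)
    \<Longrightarrow> (subst \<sigma> t, subst \<sigma>' t) \<in> eqth ar E"
proof (induction t)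
  case (App f ts)
  then have "list_all2 (\<lambda>s t. (s, t) \<in> eqth ar E) (map (subst \<sigma>) ts) (map (subst \<sigma>') ts)"
    by (auto simp: list_all2_conv_all_nth)
  then show ?case using App.prems by (auto intro: eqth.cong)
qed simp

lemma subst_inst:
  "vars t \<subseteq> {..<length ts} \<Longrightarrow> subst \<sigma> (inst t ts) = inst t (map (subst \<sigma>) ts)"
  unfolding inst_def subst_subst by (rule subst_cong) auto

lemma wf_inst: "wf_trm ar t \<Longrightarrow> (\<forall>s\<in>set ts. wf_trm ar s) \<Longrightarrow> wf_trm ar (inst t ts)"
  unfolding inst_def by (rule wf_subst) auto

lemma eval_inst:
  "eval I \<rho> (inst t ts) = eval I (\<lambda>v. if v < length ts then eval I \<rho> (ts ! v) else \<rho> v) t"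
  unfolding inst_def eval_subst by (rule eval_cong) auto

lemma inst_cong_eqth:
  assumes "wf_trm ar t" "vars t \<subseteq> {..<length ts}"
    and "list_all2 (\<lambda>a b. (a, b) \<in> eqth ar E) ts ts'"
  shows "(inst t ts, inst t ts') \<in> eqth ar E"
  unfolding inst_def
  by (rule eqth_subst_cong[OF assms(1)])
     (use assms(2,3) in \<open>auto simp: list_all2_conv_all_nth dest!: subsetD\<close>)

lemma subst_inst_cong_eqth:
  assumes "wf_trm ar t" "vars t \<subseteq> {..<length ts}"
    and "list_all2 (\<lambda>a b. (subst \<sigma> a, subst \<sigma> b) \<in> eqth ar E) ts ts'"
  shows "(subst \<sigma> (inst t ts), subst \<sigma> (inst t ts')) \<in> eqth ar E"
proof -
  have "length ts' = length ts" using assms(3) by (simp add: list_all2_lengthD)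
  then have "subst \<sigma> (inst t ts) = inst t (map (subst \<sigma>) ts)"
    and "subst \<sigma> (inst t ts') = inst t (map (subst \<sigma>) ts')"
    using assms(2) by (simp_all add: subst_inst)
  moreover have "(inst t (map (subst \<sigma>) ts), inst t (map (subst \<sigma>) ts')) \<in> eqth ar E"
    by (rule inst_cong_eqth[OF assms(1)]) (use assms(2,3) in \<open>simp_all add: list_all2_map1 list_all2_map2\<close>)
  ultimately show ?thesis by simp
qed

lemma App_eq_inst: "length ts = k \<Longrightarrow> App f ts = inst (App f (map Var [0..<k])) ts"
  by (auto simp: inst_def intro: nth_equalityI)

lemma wf_xv [simp]: "wf_trm ar (xv a)" and wf_yv [simp]: "wf_trm ar (yv b)"
  by (simp_all add: xv_def yv_def)

lemma determines_idealsI: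
  assumes "\<And>t. t \<in> S \<Longrightarrow> ideal_term ar E z t Yodd"
    and "\<And>(I :: 'f \<Rightarrow> 'a list \<Rightarrow> 'a) H. models E I \<Longrightarrow> H \<noteq> {}
           \<Longrightarrow> \<forall>t\<in>S. closed_under I H t Yodd \<Longrightarrow> is_ideal ar E z I H"
  shows "determines_ideals ar E z (with_Y S) TYPE('a)"
  unfolding determines_ideals_def
proof (intro allI impI)
  fix I :: "'f \<Rightarrow> 'a list \<Rightarrow> 'a" and H :: "'a set"
  assume "models E I" "H \<noteq> {}"
  moreover have "(\<forall>(t, Y)\<in>with_Y S. closed_under I H t Y) \<longleftrightarrow> (\<forall>t\<in>S. closed_under I H t Yodd)"
    by (auto simp: with_Y_def)
  ultimately show "is_ideal ar E z I H = (\<forall>(t, Y)\<in>with_Y S. closed_under I H t Y)"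
    using assms unfolding is_ideal_def by blast
qed

definition listed_term_sets ::
  "('f \<Rightarrow> nat) \<Rightarrow> nat \<Rightarrow> ('f, nat) trm \<Rightarrow> (nat \<Rightarrow> ('f, nat) trm) \<Rightarrow> ('f, nat) trm
    \<Rightarrow> (('f, nat) trm set \<times> ('f, nat) trm set) set" where
  "listed_term_sets ar n z alpha theta =
     {set_i ar n z alpha theta, set_ii ar n z alpha theta,
      set_iii ar n z alpha theta, set_iv ar n z alpha theta}"

section \<open>Ideal terms of a BIT speciale variety\<close>

locale bit_speciale_theory =
  fixes ar :: "'f \<Rightarrow> nat" and E :: "(('f, nat) trm \<times> ('f, nat) trm) set"
    and n :: nat and z :: "('f, nat) trm"
    and alpha :: "nat \<Rightarrow> ('f, nat) trm" and theta :: "('f, nat) trm"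
  assumes bit_speciale: "bit_speciale ar E n z alpha theta"
begin

lemma n_ge_1: "n \<ge> 1" and wf_z: "wf_trm ar z" and vars_z: "vars z = {}"
  and wf_alpha: "i \<in> {1..n} \<Longrightarrow> wf_trm ar (alpha i)"
  and vars_alpha: "i \<in> {1..n} \<Longrightarrow> vars (alpha i) \<subseteq> {0, 1}"
  and wf_theta: "wf_trm ar theta" and vars_theta: "vars theta \<subseteq> {0..n}"
  and alpha_diag_axiom: "i \<in> {1..n} \<Longrightarrow> (inst (alpha i) [Var 0, Var 0], z) \<in> eqth ar E"
  and theta_axiom:
    "(inst theta (map (\<lambda>i. inst (alpha i) [Var 0, Var 1]) [1..<n+1] @ [Var 1]), Var 0) \<in> eqth ar E"
  using bit_speciale unfolding bit_speciale_def by auto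

lemma vars_alpha_subset: "i \<in> {1..n} \<Longrightarrow> vars (alpha i) \<subseteq> {..<length [s, t]}"
  using vars_alpha by fastforce

lemma vars_theta_subset: "length ts = Suc n \<Longrightarrow> vars theta \<subseteq> {..<length ts}"
  using vars_theta by fastforce

lemma alpha_diag_eqth:
  assumes "i \<in> {1..n}" "wf_trm ar s"
  shows "(inst (alpha i) [s, s], z) \<in> eqth ar E"
  using eqth.subst[OF alpha_diag_axiom[OF assms(1)], of "\<lambda>_. s"] assms
  by (simp add: subst_inst[OF vars_alpha_subset] subst_closed vars_z)

lemma alpha_eqth_zero:
  assumes "i \<in> {1..n}" "(s, t) \<in> eqth ar E" "wf_trm ar t"
  shows "(inst (alpha i) [s, t], z) \<in> eqth ar E"
proof -
  have "(inst (alpha i) [s, t], inst (alpha i) [t, t]) \<in> eqth ar E"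
    by (rule inst_cong_eqth[OF wf_alpha[OF assms(1)] vars_alpha_subset[OF assms(1)]])
       (use assms in \<open>auto intro: eqth.refl\<close>)
  then show ?thesis using alpha_diag_eqth[OF assms(1,3)] by (rule eqth.trans)
qed

lemma theta_alpha_eqth:
  assumes "wf_trm ar a" "wf_trm ar b"
  shows "(inst theta (map (\<lambda>i. inst (alpha i) [a, b]) [1..<n+1] @ [b]), a) \<in> eqth ar E"
proof -
  let ?\<sigma> = "\<lambda>v :: nat. if v = 0 then a else b"
  let ?args = "map (\<lambda>i. inst (alpha i) [Var 0, Var 1]) [1..<n+1]"
  have "(subst ?\<sigma> (inst theta (?args @ [Var 1])), subst ?\<sigma> (Var 0)) \<in> eqth ar E"
    by (rule eqth.subst[OF theta_axiom, where \<sigma> = ?\<sigma>]) (use assms in auto)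
  moreover have "subst ?\<sigma> (inst theta (?args @ [Var 1])) = inst theta (map (subst ?\<sigma>) ?args @ [b])"
    by (simp del: upt_Suc add: subst_inst[OF vars_theta_subset])
  moreover have "map (subst ?\<sigma>) ?args = map (\<lambda>i. inst (alpha i) [a, b]) [1..<n+1]"
    unfolding map_map comp_def
  proof (rule map_cong)
    fix i assume "i \<in> set [1..<n+1]"
    then have "i \<in> {1..n}" by auto
    then show "subst ?\<sigma> (inst (alpha i) [Var 0, Var 1]) = inst (alpha i) [a, b]"
      by (subst subst_inst[OF vars_alpha_subset]) auto
  qed simp
  moreover have "subst ?\<sigma> (Var 0) = a" by simp
  ultimately show ?thesis by (simp only:)
qed

lemma theta_cong_eqth:
  assumes "length ys = n" "length ys' = n" "\<forall>j<n. (ys ! j, ys' ! j) \<in> eqth ar E" "wf_trm ar s"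
  shows "(inst theta (ys @ [s]), inst theta (ys' @ [s])) \<in> eqth ar E"
  by (rule inst_cong_eqth[OF wf_theta vars_theta_subset])
     (use assms in \<open>auto simp: list_all2_conv_all_nth nth_append intro: eqth.refl\<close>)

lemma theta_zeros_eqth:
  assumes "length ys = n" "\<forall>y\<in>set ys. (y, z) \<in> eqth ar E" "wf_trm ar s"
  shows "(inst theta (ys @ [s]), s) \<in> eqth ar E"
proof -
  let ?diag = "map (\<lambda>i. inst (alpha i) [s, s]) [1..<n+1]"
  have "(ys ! j, ?diag ! j) \<in> eqth ar E" if "j < n" for j
  proof (rule eqth.trans)
    show "(ys ! j, z) \<in> eqth ar E" using that assms(1,2) by simp
    show "(z, ?diag ! j) \<in> eqth ar E"
      using that alpha_diag_eqth[of "Suc j" s] assms(3) by (simp del: upt_Suc add: eqth.sym)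
  qed
  then have "(inst theta (ys @ [s]), inst theta (?diag @ [s])) \<in> eqth ar E"
    by (intro theta_cong_eqth) (simp_all add: assms del: upt_Suc)
  then show ?thesis using theta_alpha_eqth[OF assms(3,3)] by (rule eqth.trans)
qed

definition zero_odd :: "nat \<Rightarrow> ('f, nat) trm" where
  "zero_odd v = (if v \<in> Yodd then z else Var v)"

lemma subst_zero_odd_xv [simp]: "subst zero_odd (xv a) = xv a"
  and subst_zero_odd_yv [simp]: "subst zero_odd (yv b) = z"
  and subst_zero_odd_z [simp]: "subst zero_odd z = z"
  by (simp_all add: zero_odd_def xv_def yv_def Yodd_def subst_closed vars_z)

lemma wf_subst_zero_odd: "wf_trm ar t \<Longrightarrow> wf_trm ar (subst zero_odd t)"
  by (rule wf_subst) (simp_all add: zero_odd_def wf_z)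

lemma ideal_termI: "wf_trm ar t \<Longrightarrow> (subst zero_odd t, z) \<in> eqth ar E \<Longrightarrow> ideal_term ar E z t Yodd"
  unfolding ideal_term_def zero_odd_def by simp

lemma theta_zero_odd_eqth:
  assumes "length ys = n" "\<forall>y\<in>set ys. subst zero_odd y = z" "wf_trm ar s"
  shows "(subst zero_odd (inst theta (ys @ [s])), subst zero_odd s) \<in> eqth ar E"
proof -
  have "subst zero_odd (inst theta (ys @ [s])) = inst theta (map (subst zero_odd) ys @ [subst zero_odd s])"
    using assms(1) by (simp add: subst_inst[OF vars_theta_subset])
  moreover have "(inst theta (map (subst zero_odd) ys @ [subst zero_odd s]), subst zero_odd s) \<in> eqth ar E"
    by (rule theta_zeros_eqth) (use assms wf_z in \<open>auto intro: eqth.refl wf_subst_zero_odd\<close>)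
  ultimately show ?thesis by simp
qed

lemma ideal_term_alphaI:
  assumes "i \<in> {1..n}" "wf_trm ar s" "wf_trm ar t"
    and "(subst zero_odd s, subst zero_odd t) \<in> eqth ar E"
  shows "ideal_term ar E z (inst (alpha i) [s, t]) Yodd"
proof (rule ideal_termI)
  show "wf_trm ar (inst (alpha i) [s, t])" using assms by (simp add: wf_inst wf_alpha)
  have "subst zero_odd (inst (alpha i) [s, t]) = inst (alpha i) [subst zero_odd s, subst zero_odd t]"
    by (simp add: subst_inst[OF vars_alpha_subset[OF assms(1)]])
  then show "(subst zero_odd (inst (alpha i) [s, t]), z) \<in> eqth ar E"
    using alpha_eqth_zero[OF assms(1,4) wf_subst_zero_odd[OF assms(3)]] by simp
qed

lemma theta_zero_odd_eqth_xv:
  assumes "length ys = n" "\<forall>y\<in>set ys. subst zero_odd y = z"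
  shows "(subst zero_odd (inst theta (ys @ [xv a])), xv a) \<in> eqth ar E"
  using theta_zero_odd_eqth[OF assms, of "xv a"] by simp

lemma ideal_term_alpha_instI:
  assumes "i \<in> {1..n}" "wf_trm ar t" "vars t \<subseteq> {..<length A}"
    and "\<forall>s\<in>set A \<union> set B. wf_trm ar s"
    and "list_all2 (\<lambda>a b. (subst zero_odd a, subst zero_odd b) \<in> eqth ar E) A B"
  shows "ideal_term ar E z (inst (alpha i) [inst t A, inst t B]) Yodd"
  using assms by (intro ideal_term_alphaI subst_inst_cong_eqth wf_inst) auto

lemma ideal_term_T:
  assumes "i \<in> {1..n}" "wf_trm ar t" "vars t \<subseteq> {..<k}" "\<And>ts. length ts = k \<Longrightarrow> g ts = inst t ts"
  shows "ideal_term ar E z (T_term n alpha theta g k i) Yodd"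
  unfolding T_term_def using assms
  by (auto intro!: ideal_term_alpha_instI theta_zero_odd_eqth_xv simp: list_all2_conv_all_nth wf_inst wf_theta)

lemma ideal_term_S:
  assumes "i \<in> {1..n}" "wf_trm ar t" "vars t \<subseteq> {..<k}" "\<And>ts. length ts = k \<Longrightarrow> g ts = inst t ts"
  shows "ideal_term ar E z (S_term n alpha theta g k i j) Yodd"
  unfolding S_term_def using assms
  by (auto intro!: ideal_term_alpha_instI theta_zero_odd_eqth_xv eqth.refl
      simp: list_all2_conv_all_nth wf_inst wf_theta)

lemma ideal_term_R:
  assumes i: "i \<in> {1..n}"
  shows "ideal_term ar E z (R_term n alpha theta i) Yodd"
proof -
  have "(subst zero_odd (inst theta (map yv [0..<n] @ [xv 0])), xv 0) \<in> eqth ar E"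
    and "(subst zero_odd (inst theta (map (\<lambda>b. yv (n + b)) [0..<n] @ [xv 0])), xv 0) \<in> eqth ar E"
    by (simp_all add: theta_zero_odd_eqth_xv)
  then show ?thesis
    unfolding R_term_def
    by (intro ideal_term_alphaI[OF i]) (auto simp: wf_inst wf_theta intro: eqth.trans[OF _ eqth.sym])
qed

lemma ideal_term_theta_y: "ideal_term ar E z (theta_y n theta) Yodd"
proof (rule ideal_termI)
  have theta_y: "theta_y n theta = inst theta (map yv [0..<n] @ [yv n])"
    by (simp add: theta_y_def)
  show "wf_trm ar (theta_y n theta)"
    unfolding theta_y by (simp add: wf_inst wf_theta)
  show "(subst zero_odd (theta_y n theta), z) \<in> eqth ar E"
    unfolding theta_y using theta_zero_odd_eqth[of _ "yv n"] by simp
qed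

lemma ideal_term_alpha_yy: "i \<in> {1..n} \<Longrightarrow> ideal_term ar E z (alpha_yy alpha i) Yodd"
  unfolding alpha_yy_def by (rule ideal_term_alphaI) (auto intro: eqth.refl wf_z)

lemma ideal_term_alpha_y0: "i \<in> {1..n} \<Longrightarrow> ideal_term ar E z (alpha_y0 z alpha i) Yodd"
  unfolding alpha_y0_def by (rule ideal_term_alphaI) (auto intro: eqth.refl wf_z)

lemma ideal_term_z: "ideal_term ar E z z Yodd"
  by (rule ideal_termI) (auto intro: eqth.refl wf_z)

lemma ideal_term_TF: "t \<in> TF ar n alpha theta \<Longrightarrow> ideal_term ar E z t Yodd"
  unfolding TF_def by (auto intro!: ideal_term_T[OF _ _ _ App_eq_inst])

lemma ideal_term_SF: "t \<in> SF ar n alpha theta \<Longrightarrow> ideal_term ar E z t Yodd"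
  unfolding SF_def by (auto intro!: ideal_term_S[OF _ _ _ App_eq_inst])

lemma ideal_term_Ttheta: "t \<in> Ttheta n alpha theta \<Longrightarrow> ideal_term ar E z t Yodd"
  unfolding Ttheta_def using vars_theta by (auto intro!: ideal_term_T wf_theta)

lemma ideal_term_Talpha: "t \<in> Talpha n alpha theta \<Longrightarrow> ideal_term ar E z t Yodd"
  unfolding Talpha_def using vars_alpha by (fastforce intro!: ideal_term_T wf_alpha)

lemma ideal_term_listed:
  assumes "P \<in> listed_term_sets ar n z alpha theta" "t \<in> fst P \<union> snd P"
  shows "ideal_term ar E z t Yodd"
proof -
  let ?all = "{z, theta_y n theta} \<union> AlphaYY n alpha \<union> AlphaY0 n z alpha \<union> Rs n alpha theta
    \<union> TF ar n alpha theta \<union> Ttheta n alpha theta \<union> Talpha n alpha theta \<union> SF ar n alpha theta"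
  have "fst P \<union> snd P \<subseteq> ?all"
    using assms(1) unfolding listed_term_sets_def set_i_def set_ii_def set_iii_def set_iv_def by auto
  then have "t \<in> ?all" using assms(2) by blast
  then show ?thesis
    unfolding Rs_def AlphaYY_def AlphaY0_def
    by (auto intro: ideal_term_theta_y ideal_term_z ideal_term_alpha_yy ideal_term_alpha_y0 ideal_term_R
        ideal_term_TF ideal_term_SF ideal_term_Ttheta ideal_term_Talpha)
qed

lemma ideal_term_OpsY:
  assumes "only_constant_zero ar E z" "t \<in> OpsY ar z"
  shows "ideal_term ar E z t Yodd"
proof -
  have "ideal_term ar E z (op_y ar f) Yodd" for f
  proof (rule ideal_termI)
    show "wf_trm ar (op_y ar f)" by (simp add: op_y_def)
    have "wf_trm ar (subst zero_odd (op_y ar f))" "vars (subst zero_odd (op_y ar f)) = {}"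
      by (auto simp: op_y_def wf_z vars_z)
    then show "(subst zero_odd (op_y ar f), z) \<in> eqth ar E"
      using assms(1) unfolding only_constant_zero_def by blast
  qed
  then show ?thesis using assms(2) ideal_term_z unfolding OpsY_def by auto
qed

end

section \<open>Ideals in an algebra of the variety\<close>

definition xy_val :: "(nat \<Rightarrow> 'a) \<Rightarrow> (nat \<Rightarrow> 'a) \<Rightarrow> nat \<Rightarrow> 'a" where
  "xy_val p q v = (if even v then p (v div 2) else q (v div 2))"

lemma eval_xy_val_xv [simp]: "eval I (xy_val p q) (xv a) = p a"
  and eval_xy_val_yv [simp]: "eval I (xy_val p q) (yv b) = q b"
  by (simp_all add: xy_val_def xv_def yv_def)

lemma closed_under_xy_val:
  "closed_under I H t Yodd \<Longrightarrow> (\<And>b. q b \<in> H) \<Longrightarrow> eval I (xy_val p q) t \<in> H"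
  unfolding closed_under_def xy_val_def Yodd_def by auto

locale bit_speciale_algebra = bit_speciale_theory ar E n z alpha theta
  for ar :: "'f \<Rightarrow> nat" and E n z alpha theta +
  fixes I :: "'f \<Rightarrow> 'a list \<Rightarrow> 'a"
  assumes models: "models E I"
begin

definition zero :: 'a where
  "zero = eval I (\<lambda>_. undefined) z"

definition alpha_op :: "nat \<Rightarrow> 'a \<Rightarrow> 'a \<Rightarrow> 'a" where
  "alpha_op i a b = eval I (\<lambda>v. if v = 0 then a else b) (alpha i)"

definition theta_op :: "(nat \<Rightarrow> 'a) \<Rightarrow> 'a \<Rightarrow> 'a" where
  "theta_op h x = eval I (\<lambda>v. if v < n then h v else x) theta"

lemma eval_z [simp]: "eval I \<rho> z = zero"
  unfolding zero_def by (rule eval_cong) (simp add: vars_z)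

lemma eval_alpha:
  assumes "i \<in> {1..n}"
  shows "eval I \<rho> (inst (alpha i) [s, t]) = alpha_op i (eval I \<rho> s) (eval I \<rho> t)"
  unfolding eval_inst alpha_op_def
  using vars_alpha[OF assms] by (intro eval_cong) auto

lemma theta_op_cong: "(\<And>j. j < n \<Longrightarrow> h j = h' j) \<Longrightarrow> theta_op h x = theta_op h' x"
  unfolding theta_op_def by (rule eval_cong) auto

lemma eval_theta:
  "eval I \<rho> (inst theta (map F [0..<n] @ [x])) = theta_op (\<lambda>j. eval I \<rho> (F j)) (eval I \<rho> x)"
  unfolding eval_inst theta_op_def
  using vars_theta by (intro eval_cong) (auto simp: nth_append)

lemma alpha_op_diag: "i \<in> {1..n} \<Longrightarrow> alpha_op i a a = zero"
  using eqth_sound[OF alpha_diag_axiom models, of i "\<lambda>_. a"] by (simp add: eval_alpha)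

lemma theta_op_alpha_op: "theta_op (\<lambda>j. alpha_op (Suc j) a b) b = a"
proof -
  let ?\<rho> = "\<lambda>v :: nat. if v = 0 then a else b"
  have upt: "[1..<n+1] = map Suc [0..<n]" by (simp add: map_Suc_upt)
  have "a = eval I ?\<rho> (inst theta (map (\<lambda>i. inst (alpha i) [Var 0, Var 1]) [1..<n+1] @ [Var 1]))"
    using eqth_sound[OF theta_axiom models, of ?\<rho>] by simp
  also have "\<dots> = theta_op (\<lambda>j. eval I ?\<rho> (inst (alpha (Suc j)) [Var 0, Var 1])) (eval I ?\<rho> (Var 1))"
    unfolding upt map_map comp_def by (rule eval_theta)
  also have "\<dots> = theta_op (\<lambda>j. alpha_op (Suc j) a b) (eval I ?\<rho> (Var 1))"
    by (rule theta_op_cong) (simp add: eval_alpha)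
  finally show ?thesis by simp
qed

definition alpha_in :: "'a set \<Rightarrow> 'a \<Rightarrow> 'a \<Rightarrow> bool" where
  "alpha_in H a b \<longleftrightarrow> (\<forall>i\<in>{1..n}. alpha_op i a b \<in> H)"

definition ops_preserve_alpha_in :: "'a set \<Rightarrow> bool" where
  "ops_preserve_alpha_in H \<longleftrightarrow>
     (\<forall>f s' s. length s = ar f \<longrightarrow> list_all2 (alpha_in H) s' s \<longrightarrow> alpha_in H (I f s') (I f s))"

definition closed_zero_theta_alpha0 :: "'a set \<Rightarrow> bool" where
  "closed_zero_theta_alpha0 H \<longleftrightarrow> zero \<in> H
     \<and> (\<forall>h x. (\<forall>j<n. h j \<in> H) \<longrightarrow> x \<in> H \<longrightarrow> theta_op h x \<in> H)
     \<and> (\<forall>i\<in>{1..n}. \<forall>b\<in>H. alpha_op i b zero \<in> H)"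

lemma alpha_in_refl: "zero \<in> H \<Longrightarrow> alpha_in H a a"
  unfolding alpha_in_def by (simp add: alpha_op_diag)

lemma eval_alpha_in:
  assumes "ops_preserve_alpha_in H" "wf_trm ar t" "\<forall>v\<in>vars t. alpha_in H (\<rho>' v) (\<rho> v)"
  shows "alpha_in H (eval I \<rho>' t) (eval I \<rho> t)"
  using assms(2,3)
proof (induction t)
  case (App f ts)
  then have "list_all2 (alpha_in H) (map (eval I \<rho>') ts) (map (eval I \<rho>) ts)"
    by (auto simp: list_all2_conv_all_nth)
  then show ?case using assms(1) App.prems unfolding ops_preserve_alpha_in_def by simp
qed simp

lemma is_idealI:
  assumes closed: "closed_zero_theta_alpha0 H" and ops: "ops_preserve_alpha_in H"
  shows "is_ideal ar E z I H"
  unfolding is_ideal_def closed_under_def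
proof (intro conjI allI impI)
  show "H \<noteq> {}" using closed by (auto simp: closed_zero_theta_alpha0_def)
  fix t Y \<rho>' assume t: "ideal_term ar E z t Y" and Y: "\<forall>v\<in>Y. \<rho>' v \<in> H"
  define \<rho> where "\<rho> v = (if v \<in> Y then zero else \<rho>' v)" for v
  have "eval I \<rho> t = eval I \<rho>' (subst (\<lambda>v. if v \<in> Y then z else Var v) t)"
    unfolding eval_subst \<rho>_def by (rule eval_cong) simp
  also have "\<dots> = zero"
    using eqth_sound[OF _ models] t unfolding ideal_term_def by fastforce
  finally have t_zero: "eval I \<rho> t = zero" .
  have "alpha_in H (\<rho>' v) (\<rho> v)" for v
    using Y closed by (auto simp: \<rho>_def alpha_in_def alpha_op_diag closed_zero_theta_alpha0_def)
  then have "alpha_in H (eval I \<rho>' t) (eval I \<rho> t)"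
    using eval_alpha_in[OF ops] t unfolding ideal_term_def by blast
  then have "theta_op (\<lambda>j. alpha_op (Suc j) (eval I \<rho>' t) zero) zero \<in> H"
    using closed t_zero by (simp add: closed_zero_theta_alpha0_def alpha_in_def)
  then show "eval I \<rho>' t \<in> H" by (simp add: theta_op_alpha_op)
qed

lemma eval_theta_y: "eval I (xy_val p q) (theta_y n theta) = theta_op q (q n)"
  by (simp add: theta_y_def eval_theta)

lemma eval_alpha_yy: "i \<in> {1..n} \<Longrightarrow> eval I (xy_val p q) (alpha_yy alpha i) = alpha_op i (q 0) (q 1)"
  by (simp add: alpha_yy_def eval_alpha)

lemma eval_alpha_y0: "i \<in> {1..n} \<Longrightarrow> eval I (xy_val p q) (alpha_y0 z alpha i) = alpha_op i (q 0) zero"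
  by (simp add: alpha_y0_def eval_alpha)

lemma eval_R_term:
  "i \<in> {1..n} \<Longrightarrow> eval I (xy_val p q) (R_term n alpha theta i)
     = alpha_op i (theta_op q (p 0)) (theta_op (\<lambda>b. q (n + b)) (p 0))"
  by (simp add: R_term_def eval_alpha eval_theta)

lemma eval_T_term:
  "i \<in> {1..n} \<Longrightarrow> eval I (xy_val p q) (T_term n alpha theta (App f) k i)
     = alpha_op i (I f (map (\<lambda>a. theta_op (\<lambda>b. q (a * n + b)) (p a)) [0..<k])) (I f (map p [0..<k]))"
  by (simp add: T_term_def eval_alpha eval_theta comp_def)

lemma eval_S_term:
  "i \<in> {1..n} \<Longrightarrow> eval I (xy_val p q) (S_term n alpha theta (App f) k i j)
     = alpha_op i (I f (map (\<lambda>a. if a = j then theta_op q (p a) else p a) [0..<k])) (I f (map p [0..<k]))"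
  by (simp add: S_term_def eval_alpha eval_theta comp_def if_distrib cong: if_cong)

lemma eval_op_y: "eval I (xy_val p q) (op_y ar f) = I f (map q [0..<ar f])"
  by (simp add: op_y_def comp_def)

lemma theta_closed_if_theta_y:
  assumes "closed_under I H (theta_y n theta) Yodd" "\<forall>j<n. h j \<in> H" "x \<in> H"
  shows "theta_op h x \<in> H"
proof -
  let ?q = "\<lambda>j. if j < n then h j else x"
  have "theta_op ?q (?q n) \<in> H"
    using closed_under_xy_val[OF assms(1), of ?q] assms(2,3) by (simp add: eval_theta_y)
  moreover have "theta_op ?q (?q n) = theta_op h x" by (auto intro: theta_op_cong)
  ultimately show ?thesis by simp
qed

lemma zero_in_if_alpha_yy:
  assumes "closed_under I H (alpha_yy alpha 1) Yodd" "h \<in> H"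
  shows "zero \<in> H"
  using closed_under_xy_val[OF assms(1), of "\<lambda>_. h"] assms(2) n_ge_1
  by (simp add: eval_alpha_yy alpha_op_diag)

lemma alpha0_in_if_alpha_yy:
  assumes "closed_under I H (alpha_yy alpha i) Yodd" "i \<in> {1..n}" "zero \<in> H" "b \<in> H"
  shows "alpha_op i b zero \<in> H"
  using closed_under_xy_val[OF assms(1), of "\<lambda>j. if j = 0 then b else zero"] assms(2-4)
  by (simp add: eval_alpha_yy)

lemma alpha0_in_if_alpha_y0:
  assumes "closed_under I H (alpha_y0 z alpha i) Yodd" "i \<in> {1..n}" "b \<in> H"
  shows "alpha_op i b zero \<in> H"
  using closed_under_xy_val[OF assms(1), of "\<lambda>_. b"] assms(2,3) by (simp add: eval_alpha_y0)

lemma zero_in_if_z: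
  assumes "closed_under I H z Yodd" "h \<in> H"
  shows "zero \<in> H"
  using closed_under_xy_val[OF assms(1), of "\<lambda>_. h"] assms(2) by simp

lemma zero_in_if_R_term:
  assumes "closed_under I H (R_term n alpha theta 1) Yodd" "h \<in> H"
  shows "zero \<in> H"
  using closed_under_xy_val[OF assms(1), of "\<lambda>_. h"] assms(2) n_ge_1
  by (simp add: eval_R_term alpha_op_diag)

lemma eval_in_if_OpsY:
  assumes ops: "\<And>f. closed_under I H (op_y ar f) Yodd" and zero: "zero \<in> H"
  shows "wf_trm ar t \<Longrightarrow> \<forall>v\<in>vars t. \<rho> v \<in> H \<Longrightarrow> eval I \<rho> t \<in> H"
proof (induction t)
  case (App f ts)
  let ?q = "\<lambda>j. if j < ar f then eval I \<rho> (ts ! j) else zero"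
  have "I f (map ?q [0..<ar f]) \<in> H"
    using closed_under_xy_val[OF ops, of ?q] App zero by (auto simp: eval_op_y)
  moreover have "map ?q [0..<ar f] = map (eval I \<rho>) ts"
    using App.prems by (auto intro: nth_equalityI)
  ultimately show ?case by simp
qed simp

lemma closed_zero_theta_alpha0_if_OpsY:
  assumes "H \<noteq> {}" "\<forall>t\<in>OpsY ar z. closed_under I H t Yodd"
  shows "closed_zero_theta_alpha0 H"
proof -
  have ops: "\<And>f. closed_under I H (op_y ar f) Yodd" using assms(2) by (simp add: OpsY_def)
  have zero: "zero \<in> H" using assms zero_in_if_z by (auto simp: OpsY_def)
  show ?thesis
    unfolding closed_zero_theta_alpha0_def theta_op_def alpha_op_def
    using zero wf_theta wf_alpha by (auto intro!: eval_in_if_OpsY[OF ops zero])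
qed

lemma ops_preserve_alpha_in_if_TF:
  assumes zero: "zero \<in> H" and TF: "\<forall>t\<in>TF ar n alpha theta. closed_under I H t Yodd"
  shows "ops_preserve_alpha_in H"
  unfolding ops_preserve_alpha_in_def
proof (intro allI impI)
  fix f s' s assume len: "length s = ar f" and rel: "list_all2 (alpha_in H) s' s"
  \<comment> \<open>evaluate T_{f,i} at x_a := s_a and y_{a,b} := alpha_{b+1}(s'_a, s_a); by the BIT identity
    its first argument becomes f s'\<close>
  let ?q = "\<lambda>c. if c div n < ar f then alpha_op (Suc (c mod n)) (s' ! (c div n)) (s ! (c div n)) else zero"
  have q: "?q c \<in> H" for c
  proof (cases "c div n < ar f")
    case True
    then have "alpha_in H (s' ! (c div n)) (s ! (c div n))"
      using rel len by (simp add: list_all2_conv_all_nth)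
    moreover have "c mod n < n" using n_ge_1 by simp
    ultimately show ?thesis using True by (simp add: alpha_in_def)
  qed (simp add: zero)
  have "map (\<lambda>a. theta_op (\<lambda>b. ?q (a * n + b)) (s ! a)) [0..<ar f] = map (\<lambda>a. s' ! a) [0..<ar f]"
    \<comment> \<open>plain \<open>refl\<close> denotes the reflexivity rule of \<open>eqth\<close> here\<close>
  proof (rule map_cong[OF HOL.refl])
    fix a assume "a \<in> set [0..<ar f]"
    then have a: "a < ar f" by simp
    have "theta_op (\<lambda>b. ?q (a * n + b)) (s ! a) = theta_op (\<lambda>b. alpha_op (Suc b) (s' ! a) (s ! a)) (s ! a)"
      by (rule theta_op_cong) (simp add: a)
    also have "\<dots> = s' ! a" by (rule theta_op_alpha_op)
    finally show "theta_op (\<lambda>b. ?q (a * n + b)) (s ! a) = s' ! a" .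
  qed
  also have "\<dots> = s'" using rel len map_nth list_all2_lengthD by metis
  finally have s': "map (\<lambda>a. theta_op (\<lambda>b. ?q (a * n + b)) (s ! a)) [0..<ar f] = s'" .
  have s: "map (\<lambda>a. s ! a) [0..<ar f] = s" using len map_nth by metis
  show "alpha_in H (I f s') (I f s)"
    unfolding alpha_in_def
  proof
    fix i assume i: "i \<in> {1..n}"
    then have "T_term n alpha theta (App f) (ar f) i \<in> TF ar n alpha theta" by (auto simp: TF_def)
    then have "eval I (xy_val (\<lambda>a. s ! a) ?q) (T_term n alpha theta (App f) (ar f) i) \<in> H"
      using TF q by (intro closed_under_xy_val) auto
    then show "alpha_op i (I f s') (I f s) \<in> H" by (simp only: eval_T_term[OF i] s s')
  qed
qed

lemma alpha_in_euclidean_if_Rs: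
  assumes Rs: "\<forall>i\<in>{1..n}. closed_under I H (R_term n alpha theta i) Yodd" and zero: "zero \<in> H"
    and ab: "alpha_in H a b" and cb: "alpha_in H c b"
  shows "alpha_in H a c"
  unfolding alpha_in_def
proof
  fix i assume i: "i \<in> {1..n}"
  let ?q = "\<lambda>m. if m < n then alpha_op (Suc m) a b
                else if m < 2 * n then alpha_op (Suc (m - n)) c b else zero"
  have "?q m \<in> H" for m using ab cb zero by (auto simp: alpha_in_def)
  then have "eval I (xy_val (\<lambda>_. b) ?q) (R_term n alpha theta i) \<in> H"
    using Rs i by (intro closed_under_xy_val) auto
  moreover have "theta_op ?q b = theta_op (\<lambda>j. alpha_op (Suc j) a b) b"
    by (rule theta_op_cong) simp
  moreover have "theta_op (\<lambda>m. ?q (n + m)) b = theta_op (\<lambda>j. alpha_op (Suc j) c b) b"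
    by (rule theta_op_cong) simp
  ultimately show "alpha_op i a c \<in> H" by (simp add: eval_R_term[OF i] theta_op_alpha_op)
qed

lemma alpha_in_sym_if_Rs:
  assumes "\<forall>i\<in>{1..n}. closed_under I H (R_term n alpha theta i) Yodd" "zero \<in> H" "alpha_in H a b"
  shows "alpha_in H b a"
  using alpha_in_euclidean_if_Rs[OF assms(1,2) alpha_in_refl[OF assms(2)] assms(3)] .

lemma alpha_in_trans_if_Rs:
  assumes "\<forall>i\<in>{1..n}. closed_under I H (R_term n alpha theta i) Yodd" "zero \<in> H"
    and "alpha_in H a b" "alpha_in H b c"
  shows "alpha_in H a c"
  using alpha_in_euclidean_if_Rs[OF assms(1-3) alpha_in_sym_if_Rs[OF assms(1,2,4)]] .

lemma alpha_in_update_if_SF: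
  assumes SF: "\<forall>t\<in>SF ar n alpha theta. closed_under I H t Yodd" and zero: "zero \<in> H"
    and len: "length u = ar f" and j: "j < ar f" and rel: "alpha_in H w (u ! j)"
  shows "alpha_in H (I f (u[j := w])) (I f u)"
  unfolding alpha_in_def
proof
  fix i assume i: "i \<in> {1..n}"
  let ?q = "\<lambda>b. if b < n then alpha_op (Suc b) w (u ! j) else zero"
  have "?q b \<in> H" for b using rel zero by (auto simp: alpha_in_def)
  moreover have "S_term n alpha theta (App f) (ar f) i j \<in> SF ar n alpha theta"
    using i j by (auto simp: SF_def)
  ultimately have "eval I (xy_val (\<lambda>a. u ! a) ?q) (S_term n alpha theta (App f) (ar f) i j) \<in> H"
    using SF by (intro closed_under_xy_val) auto
  moreover have "theta_op ?q (u ! j) = theta_op (\<lambda>b. alpha_op (Suc b) w (u ! j)) (u ! j)"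
    by (rule theta_op_cong) simp
  then have "map (\<lambda>a. if a = j then theta_op ?q (u ! a) else u ! a) [0..<ar f] = u[j := w]"
    using len by (auto simp: nth_list_update theta_op_alpha_op intro: nth_equalityI)
  moreover have "map (\<lambda>a. u ! a) [0..<ar f] = u" using len map_nth by metis
  ultimately show "alpha_op i (I f (u[j := w])) (I f u) \<in> H" by (simp add: eval_S_term[OF i])
qed

lemma ops_preserve_alpha_in_if_Rs_SF:
  assumes Rs: "\<forall>i\<in>{1..n}. closed_under I H (R_term n alpha theta i) Yodd"
    and SF: "\<forall>t\<in>SF ar n alpha theta. closed_under I H t Yodd" and zero: "zero \<in> H"
  shows "ops_preserve_alpha_in H"
  unfolding ops_preserve_alpha_in_def
proof (intro allI impI)
  fix f s' s assume len: "length s = ar f" and rel: "list_all2 (alpha_in H) s' s"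
  define u where "u m = map (\<lambda>a. if a < m then s' ! a else s ! a) [0..<ar f]" for m
  have "alpha_in H (I f (u m)) (I f s)" if "m \<le> ar f" for m
    using that
  proof (induction m)
    case 0
    have "u 0 = s" using len by (auto simp: u_def intro: nth_equalityI)
    then show ?case using alpha_in_refl[OF zero] by simp
  next
    case (Suc m)
    have "u (Suc m) = (u m)[m := s' ! m]"
      using Suc.prems by (auto simp: u_def nth_list_update intro: nth_equalityI)
    moreover have "alpha_in H (s' ! m) (u m ! m)"
      using rel len Suc.prems by (simp add: u_def list_all2_conv_all_nth)
    ultimately have "alpha_in H (I f (u (Suc m))) (I f (u m))"
      using alpha_in_update_if_SF[OF SF zero] Suc.prems by (simp add: u_def)
    then show ?case using Suc alpha_in_trans_if_Rs[OF Rs zero] by simp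
  qed
  moreover have "u (ar f) = s'"
    using rel len by (auto simp: u_def list_all2_lengthD intro: nth_equalityI)
  ultimately show "alpha_in H (I f s') (I f s)" by (metis order_refl)
qed

lemma closed_zero_theta_alpha0_if_listed:
  assumes P: "P \<in> listed_term_sets ar n z alpha theta" and "H \<noteq> {}"
    and closed: "\<forall>t\<in>fst P \<union> snd P. closed_under I H t Yodd"
  shows "closed_zero_theta_alpha0 H"
proof -
  obtain h where h: "h \<in> H" using assms(2) by blast
  have "theta_y n theta \<in> fst P"
    using P unfolding listed_term_sets_def set_i_def set_ii_def set_iii_def set_iv_def by auto
  then have theta: "\<forall>g x. (\<forall>j<n. g j \<in> H) \<longrightarrow> x \<in> H \<longrightarrow> theta_op g x \<in> H"
    using closed theta_closed_if_theta_y by blast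
  have "AlphaYY n alpha \<subseteq> fst P \<or> z \<in> fst P \<and> AlphaY0 n z alpha \<subseteq> fst P
      \<or> Rs n alpha theta \<subseteq> snd P \<and> AlphaY0 n z alpha \<subseteq> fst P"
    using P unfolding listed_term_sets_def
    by (elim insertE emptyE) (auto simp: set_i_def set_ii_def set_iii_def set_iv_def)
  then consider (alpha_yy) "AlphaYY n alpha \<subseteq> fst P"
    | (z) "z \<in> fst P" "AlphaY0 n z alpha \<subseteq> fst P"
    | (R) "Rs n alpha theta \<subseteq> snd P" "AlphaY0 n z alpha \<subseteq> fst P"
    by blast
  then have "zero \<in> H \<and> (\<forall>i\<in>{1..n}. \<forall>b\<in>H. alpha_op i b zero \<in> H)"
  proof cases
    case alpha_yy
    have yy: "closed_under I H (alpha_yy alpha i) Yodd" if "i \<in> {1..n}" for i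
      using closed alpha_yy that unfolding AlphaYY_def by blast
    have "zero \<in> H" using zero_in_if_alpha_yy[OF yy h] n_ge_1 by simp
    then show ?thesis using alpha0_in_if_alpha_yy[OF yy] by blast
  next
    case z
    have "alpha_op i b zero \<in> H" if "i \<in> {1..n}" "b \<in> H" for i b
      using closed z(2) that alpha0_in_if_alpha_y0 unfolding AlphaY0_def by blast
    then show ?thesis using closed z(1) zero_in_if_z[OF _ h] by blast
  next
    case R
    have "alpha_op i b zero \<in> H" if "i \<in> {1..n}" "b \<in> H" for i b
      using closed R(2) that alpha0_in_if_alpha_y0 unfolding AlphaY0_def by blast
    moreover have "R_term n alpha theta 1 \<in> snd P" using R(1) n_ge_1 unfolding Rs_def by auto
    ultimately show ?thesis using closed zero_in_if_R_term[OF _ h] by blast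
  qed
  then show ?thesis using theta unfolding closed_zero_theta_alpha0_def by blast
qed

lemma ops_preserve_alpha_in_if_listed:
  assumes "P \<in> listed_term_sets ar n z alpha theta" "zero \<in> H"
    and "\<forall>t\<in>snd P. closed_under I H t Yodd"
  shows "ops_preserve_alpha_in H"
proof -
  have "TF ar n alpha theta \<subseteq> snd P \<or> Rs n alpha theta \<union> SF ar n alpha theta \<subseteq> snd P"
    using assms(1) unfolding listed_term_sets_def
    by (elim insertE emptyE) (auto simp: set_i_def set_ii_def set_iii_def set_iv_def)
  then show ?thesis
  proof
    assume "TF ar n alpha theta \<subseteq> snd P"
    then show ?thesis using assms(2,3) by (auto intro: ops_preserve_alpha_in_if_TF)
  next
    assume Rs_SF: "Rs n alpha theta \<union> SF ar n alpha theta \<subseteq> snd P"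
    then have "\<forall>i\<in>{1..n}. closed_under I H (R_term n alpha theta i) Yodd"
      using assms(3) unfolding Rs_def by blast
    then show ?thesis using Rs_SF assms(2,3) by (intro ops_preserve_alpha_in_if_Rs_SF) blast+
  qed
qed

lemma is_ideal_if_listed:
  assumes "P \<in> listed_term_sets ar n z alpha theta" "H \<noteq> {}"
    and "\<forall>t\<in>fst P \<union> snd P. closed_under I H t Yodd"
  shows "is_ideal ar E z I H"
proof (rule is_idealI)
  show closed: "closed_zero_theta_alpha0 H"
    using closed_zero_theta_alpha0_if_listed[OF assms] .
  show "ops_preserve_alpha_in H"
    using ops_preserve_alpha_in_if_listed[OF assms(1)] closed assms(3)
    by (simp add: closed_zero_theta_alpha0_def)
qed

lemma is_ideal_if_OpsY_listed:
  assumes "P \<in> listed_term_sets ar n z alpha theta" "H \<noteq> {}"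
    and "\<forall>t\<in>OpsY ar z \<union> snd P. closed_under I H t Yodd"
  shows "is_ideal ar E z I H"
proof (rule is_idealI)
  show closed: "closed_zero_theta_alpha0 H"
    using closed_zero_theta_alpha0_if_OpsY assms(2,3) by simp
  show "ops_preserve_alpha_in H"
    using ops_preserve_alpha_in_if_listed[OF assms(1)] closed assms(3)
    by (simp add: closed_zero_theta_alpha0_def)
qed

end

theorem theorem2p6:
  fixes ar :: "'f \<Rightarrow> nat"
    and E :: "(('f, nat) trm \<times> ('f, nat) trm) set"
    and n :: nat and z :: "('f, nat) trm"
    and alpha :: "nat \<Rightarrow> ('f, nat) trm" and theta :: "('f, nat) trm"
  assumes "wf_eqs ar E"
    and "bit_speciale ar E n z alpha theta"
  shows "(\<forall>P \<in> {set_i ar n z alpha theta, set_ii ar n z alpha theta,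
                  set_iii ar n z alpha theta, set_iv ar n z alpha theta}.
            determines_ideals ar E z (with_Y (fst P \<union> snd P)) TYPE('a))
       \<and> (only_constant_zero ar E z \<longrightarrow>
          (\<forall>P \<in> {set_i ar n z alpha theta, set_ii ar n z alpha theta,
                  set_iii ar n z alpha theta, set_iv ar n z alpha theta}.
            determines_ideals ar E z (with_Y (OpsY ar z \<union> snd P)) TYPE('a)))"
proof (unfold listed_term_sets_def[symmetric], intro conjI ballI impI)
  interpret bit_speciale_theory ar E n z alpha theta
    using assms(2) by unfold_locales
  have algebra: "bit_speciale_algebra ar E n z alpha theta I" if "models E I"
    for I :: "'f \<Rightarrow> 'a list \<Rightarrow> 'a"
    using assms(2) that by unfold_locales
  fix P assume P: "P \<in> listed_term_sets ar n z alpha theta"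
  show "determines_ideals ar E z (with_Y (fst P \<union> snd P)) TYPE('a)"
    by (rule determines_idealsI)
      (use ideal_term_listed[OF P] bit_speciale_algebra.is_ideal_if_listed[OF algebra] P in blast)+
  assume "only_constant_zero ar E z"
  show "determines_ideals ar E z (with_Y (OpsY ar z \<union> snd P)) TYPE('a)"
    by (rule determines_idealsI)
      (use ideal_term_listed[OF P] ideal_term_OpsY[OF \<open>only_constant_zero ar E z\<close>]
        bit_speciale_algebra.is_ideal_if_OpsY_listed[OF algebra] P in blast)+
qed

end
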